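(* Consider the one-dimensional compressible Euler equations for a perfect gas with ratio of specific heats $\gamma>1$, with conserved variables $\mathbf U=(\rho,\rho u,\rho E)^T$ and flux $\mathbf F(\mathbf U)=(\rho u,\ \rho u^2+p,\ \rho uE+pu)^T$, where $E=\frac{p}{(\gamma-1)\rho}+\frac{u^2}{2}$, restricted to states with $\rho>0,\ p>0$. Let cells $j$ of widths $\Delta x_j>0$ carry states $\mathbf U_j(t)$, and consider the semi-discrete finite-volume scheme $$\Delta x_j\frac{d\mathbf U_j}{dt}=-\big(\mathbf F_{j+\frac12}-\mathbf F_{j-\frac12}\big),$$ where the interface flux $\mathbf F_{j+\frac12}=(F^1,F^2,F^3)_{j+\frac12}$ is the ECKEP flux $$F^1_{j+\frac12}=\overline{F^1},\qquad F^2_{j+\frac12}=\overline{F^1}\,\overline{u}+\overline{p},\qquad F^3_{j+\frac12}=\overline{F^3}-\frac{\alpha_3}{2}\,\Delta V_3,$$ $$\frac{\alpha_3}{2}=\frac{\overline{F^1}\,\Delta V_1+(\overline{F^1}\,\overline{u}+\overline{p})\,\Delta V_2+\overline{F^3}\,\Delta V_3-\Delta\psi}{\Delta V_3\,\Delta V_3}.$$ Here, for any cell quantity $X$, $\overline{X}=\overline{X}_{j+\frac12}=\tfrac12(X_{j+1}+X_j)$ and $\Delta X=\Delta X_{j+\frac12}=X_{j+1}-X_j$; $F^1,F^3$ denote the first and third components of $\mathbf F(\mathbf U)$ evaluated at cell states; $\mathbf V=(V_1,V_2,V_3)$ is the entropy variable vector and $\psi$ the entropy flux potential defined in the context. Assume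 $\Delta V_3\neq 0$ at every interface. Then: (i) at every interface, $(\mathbf V_{j+1}-\mathbf V_j)\cdot\mathbf F_{j+\frac12}=\psi_{j+1}-\psi_j$; (ii) every solution of the semi-discrete scheme satisfies, for each $j$, $$\Delta x_j\frac{d\eta(\mathbf U_j)}{dt}+\zeta_{j+\frac12}-\zeta_{j-\frac12}=0,\qquad \zeta_{j+\frac12}=\overline{\mathbf V}_{j+\frac12}\cdot\mathbf F_{j+\frac12}-\overline{\psi}_{j+\frac12};$$ (iii) every solution of the semi-discrete scheme satisfies, for each $j$, $$\Delta x_j\frac{d}{dt}\Big(\frac{\rho_ju_j^2}{2}\Big)+K_{j+\frac12}-K_{j-\frac12}=-u_j\big(\overline{p}_{j+\frac12}-\overline{p}_{j-\frac12}\big),\qquad K_{j+\frac12}=\frac{u_{j+1}u_j}{2}\,F^1_{j+\frac12}.$$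
   Context: Specific entropy: $s=\ln(p/\rho^\gamma)$. Mathematical entropy: $\eta(\mathbf U)=-\frac{\rho s}{\gamma-1}$. Entropy variables: $\mathbf V=\frac{d\eta}{d\mathbf U}=\Big(\frac{\gamma-s}{\gamma-1}-\frac{\rho u^2}{2p},\ \frac{\rho u}{p},\ -\frac{\rho}{p}\Big)^T$. Entropy flux potential: $\psi=\mathbf V\cdot\mathbf F(\mathbf U)-\zeta(\mathbf U)=\rho u$, where $\zeta(\mathbf U)=-\frac{\rho us}{\gamma-1}$. Subscript $j$ denotes evaluation at the state $\mathbf U_j$. *)

theory Defs
  imports "HOL-Analysis.Analysis"
begin

text \<open>States are conserved-variable triples U = (rho, rho u, rho E).\<close>
type_synonym state = "real \<times> real \<times> real"

definition dens :: "state \<Rightarrow> real" where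
  "dens U = fst U"

definition vel :: "state \<Rightarrow> real" where
  "vel U = fst (snd U) / fst U"

definition pres :: "real \<Rightarrow> state \<Rightarrow> real" where
  "pres \<gamma> U = (\<gamma> - 1) * (snd (snd U) - (fst (snd U))^2 / (2 * fst U))"

definition flux :: "real \<Rightarrow> state \<Rightarrow> state" where
  "flux \<gamma> U = (dens U * vel U,
               dens U * (vel U)^2 + pres \<gamma> U,
               vel U * snd (snd U) + pres \<gamma> U * vel U)"

definition F1 :: "real \<Rightarrow> state \<Rightarrow> real" where "F1 \<gamma> U = fst (flux \<gamma> U)"
definition F3 :: "real \<Rightarrow> state \<Rightarrow> real" where "F3 \<gamma> U = snd (snd (flux \<gamma> U))"

definition sent :: "real \<Rightarrow> state \<Rightarrow> real" where
  "sent \<gamma> U = ln (pres \<gamma> U / (dens U powr \<gamma>))"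

definition eta :: "real \<Rightarrow> state \<Rightarrow> real" where
  "eta \<gamma> U = - dens U * sent \<gamma> U / (\<gamma> - 1)"

definition V1 :: "real \<Rightarrow> state \<Rightarrow> real" where
  "V1 \<gamma> U = (\<gamma> - sent \<gamma> U) / (\<gamma> - 1) - dens U * (vel U)^2 / (2 * pres \<gamma> U)"
definition V2 :: "real \<Rightarrow> state \<Rightarrow> real" where
  "V2 \<gamma> U = dens U * vel U / pres \<gamma> U"
definition V3 :: "real \<Rightarrow> state \<Rightarrow> real" where
  "V3 \<gamma> U = - dens U / pres \<gamma> U"

definition Vent :: "real \<Rightarrow> state \<Rightarrow> state" where
  "Vent \<gamma> U = (V1 \<gamma> U, V2 \<gamma> U, V3 \<gamma> U)"

definition psi :: "state \<Rightarrow> real" where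
  "psi U = dens U * vel U"

definition zeta :: "real \<Rightarrow> state \<Rightarrow> real" where
  "zeta \<gamma> U = - dens U * vel U * sent \<gamma> U / (\<gamma> - 1)"

definition dot3 :: "state \<Rightarrow> state \<Rightarrow> real" where
  "dot3 a b = fst a * fst b + fst (snd a) * fst (snd b) + snd (snd a) * snd (snd b)"

definition avg :: "real \<Rightarrow> real \<Rightarrow> real" where
  "avg a b = (a + b) / 2"

definition alpha3_half :: "real \<Rightarrow> state \<Rightarrow> state \<Rightarrow> real" where
  "alpha3_half \<gamma> UL UR =
     (avg (F1 \<gamma> UL) (F1 \<gamma> UR) * (V1 \<gamma> UR - V1 \<gamma> UL)
      + (avg (F1 \<gamma> UL) (F1 \<gamma> UR) * avg (vel UL) (vel UR) + avg (pres \<gamma> UL) (pres \<gamma> UR))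
          * (V2 \<gamma> UR - V2 \<gamma> UL)
      + avg (F3 \<gamma> UL) (F3 \<gamma> UR) * (V3 \<gamma> UR - V3 \<gamma> UL)
      - (psi UR - psi UL))
     / ((V3 \<gamma> UR - V3 \<gamma> UL) * (V3 \<gamma> UR - V3 \<gamma> UL))"

definition eckep :: "real \<Rightarrow> state \<Rightarrow> state \<Rightarrow> state" where
  "eckep \<gamma> UL UR =
     (avg (F1 \<gamma> UL) (F1 \<gamma> UR),
      avg (F1 \<gamma> UL) (F1 \<gamma> UR) * avg (vel UL) (vel UR) + avg (pres \<gamma> UL) (pres \<gamma> UR),
      avg (F3 \<gamma> UL) (F3 \<gamma> UR) - alpha3_half \<gamma> UL UR * (V3 \<gamma> UR - V3 \<gamma> UL))"

definition zeta_num :: "real \<Rightarrow> state \<Rightarrow> state \<Rightarrow> real" where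
  "zeta_num \<gamma> UL UR =
     dot3 ((1/2) *\<^sub>R (Vent \<gamma> UL + Vent \<gamma> UR)) (eckep \<gamma> UL UR) - avg (psi UL) (psi UR)"

definition Kflux :: "real \<Rightarrow> state \<Rightarrow> state \<Rightarrow> real" where
  "Kflux \<gamma> UL UR = vel UR * vel UL / 2 * fst (eckep \<gamma> UL UR)"

definition admissible :: "real \<Rightarrow> state \<Rightarrow> bool" where
  "admissible \<gamma> U \<longleftrightarrow> dens U > 0 \<and> pres \<gamma> U > 0"

end

theory Submission
  imports Defs
begin

(* Part (i) is what the correction term alpha3 is built for: the energy flux is corrected
   along Delta V3 by exactly the amount that makes Delta V . F equal to Delta psi.
   Since V is the gradient of eta, the scheme gives dx d(eta)/dt = - V_j . (F_{j+1/2} - F_{j-1/2}),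
   and Tadmor's identity rewrites this as a difference of the numerical entropy fluxes zeta
   whenever (i) holds at both interfaces. Likewise d(rho u^2/2) = u d(rho u) - u^2/2 d(rho),
   and because the momentum flux has the kinetic-energy-preserving form F1 avg(u) + avg(p),
   the convective terms telescope into K and only the pressure term remains. *)

lemma dot3_eq_inner: "dot3 = inner"
  by (auto simp: fun_eq_iff dot3_def inner_prod_def)

lemma eta_has_derivative:
  assumes "\<gamma> > 1" and "admissible \<gamma> U"
  shows "(eta \<gamma> has_derivative (\<lambda>h. dot3 (Vent \<gamma> U) h)) (at U)"
proof -
  obtain \<rho> m e where U: "U = (\<rho>, m, e)" by (cases U) auto
  define q where "q = e - m^2 / (2 * \<rho>)"
  define k where "k = \<gamma> - 1"
  have \<rho>: "\<rho> > 0" and q: "q > 0" and k: "k > 0"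
    using assms by (auto simp: U q_def k_def admissible_def dens_def pres_def zero_less_mult_iff)
  have eta_eq: "eta \<gamma> = (\<lambda>U. - fst U * ln ((\<gamma> - 1) * (snd (snd U) - (fst (snd U))^2 / (2 * fst U))
                                            / fst U powr \<gamma>) / (\<gamma> - 1))"
    by (auto simp: fun_eq_iff eta_def sent_def pres_def dens_def)
  show ?thesis
    unfolding eta_eq
    apply (rule derivative_eq_intros refl | (use \<rho> q assms(1) in \<open>simp add: U q_def\<close>; fail))+
    apply (rule ext)
    using \<rho> q k
    apply (simp add: U Vent_def dot3_def V1_def V2_def V3_def sent_def pres_def dens_def vel_def
        flip: q_def k_def)
    apply (simp add: field_simps power2_eq_square)
    done
qed

lemma kinetic_energy_has_derivative:
  assumes "dens U \<noteq> 0"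
  shows "((\<lambda>U. dens U * (vel U)^2 / 2) has_derivative
           (\<lambda>h. vel U * fst (snd h) - (vel U)^2 / 2 * fst h)) (at U)"
  unfolding dens_def vel_def
  apply (rule derivative_eq_intros refl | (use assms in \<open>simp add: dens_def\<close>; fail))+
  using assms by (auto simp: dens_def field_simps power2_eq_square)

lemma has_real_derivative_chain_vector:
  assumes "(f has_vector_derivative f') (at t)" and "(g has_derivative g') (at (f t))"
  shows "((\<lambda>\<tau>. g (f \<tau>)) has_real_derivative g' f') (at t)"
  using vector_derivative_diff_chain_within[OF assms(1) has_derivative_at_withinI[OF assms(2)]]
  by (simp add: o_def has_real_derivative_iff_has_vector_derivative)

lemma eckep_entropy_conservative:
  assumes "V3 \<gamma> UR \<noteq> V3 \<gamma> UL"
  shows "dot3 (Vent \<gamma> UR - Vent \<gamma> UL) (eckep \<gamma> UL UR) = psi UR - psi UL"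
proof -
  define d where "d = V3 \<gamma> UR - V3 \<gamma> UL"
  have "d \<noteq> 0" and "V3 \<gamma> UR = V3 \<gamma> UL + d" using assms by (simp_all add: d_def)
  then show ?thesis by (simp add: dot3_def Vent_def eckep_def alpha3_half_def field_simps)
qed

lemma entropy_conservative_flux_difference:
  assumes "dot3 (Vp - V) Fp = \<psi>p - \<psi>" and "dot3 (V - Vm) Fm = \<psi> - \<psi>m"
  shows "dot3 V (Fp - Fm) =
    (dot3 ((1/2) *\<^sub>R (V + Vp)) Fp - avg \<psi> \<psi>p) - (dot3 ((1/2) *\<^sub>R (Vm + V)) Fm - avg \<psi>m \<psi>)"
  using assms
  by (simp add: dot3_eq_inner avg_def inner_diff_left inner_diff_right inner_add_left field_simps)

lemma eckep_entropy_balance: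
  assumes "V3 \<gamma> Up \<noteq> V3 \<gamma> U0" and "V3 \<gamma> U0 \<noteq> V3 \<gamma> Um"
    and "dx *\<^sub>R U' = - (eckep \<gamma> U0 Up - eckep \<gamma> Um U0)"
  shows "dx * dot3 (Vent \<gamma> U0) U' + zeta_num \<gamma> U0 Up - zeta_num \<gamma> Um U0 = 0"
proof -
  have "dx * dot3 (Vent \<gamma> U0) U' = - dot3 (Vent \<gamma> U0) (eckep \<gamma> U0 Up - eckep \<gamma> Um U0)"
    using assms(3) by (metis dot3_eq_inner inner_scaleR_right inner_minus_right)
  also have "\<dots> = - (zeta_num \<gamma> U0 Up - zeta_num \<gamma> Um U0)"
    using entropy_conservative_flux_difference[OF eckep_entropy_conservative[OF assms(1)]
        eckep_entropy_conservative[OF assms(2)]]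
    by (simp add: zeta_num_def)
  finally show ?thesis by simp
qed

lemma eckep_kinetic_energy_balance:
  assumes "dx *\<^sub>R U' = - (eckep \<gamma> U0 Up - eckep \<gamma> Um U0)"
  shows "dx * (vel U0 * fst (snd U') - (vel U0)^2 / 2 * fst U') + Kflux \<gamma> U0 Up - Kflux \<gamma> Um U0
         = - vel U0 * (avg (pres \<gamma> U0) (pres \<gamma> Up) - avg (pres \<gamma> Um) (pres \<gamma> U0))"
proof -
  have mass: "dx * fst U' = - (fst (eckep \<gamma> U0 Up) - fst (eckep \<gamma> Um U0))"
    and momentum: "dx * fst (snd U') = - (fst (snd (eckep \<gamma> U0 Up)) - fst (snd (eckep \<gamma> Um U0)))"
    using arg_cong[OF assms, of fst] arg_cong[OF assms, of "\<lambda>x. fst (snd x)"] by simp_all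
  have "dx * (vel U0 * fst (snd U') - (vel U0)^2 / 2 * fst U')
        = vel U0 * (dx * fst (snd U')) - (vel U0)^2 / 2 * (dx * fst U')"
    by (simp add: algebra_simps)
  then show ?thesis
    unfolding mass momentum by (simp add: eckep_def Kflux_def avg_def field_simps power2_eq_square)
qed

theorem mainTheorem1:
  fixes \<gamma> :: real
    and T :: "real set"
    and dx :: "int \<Rightarrow> real"
    and U U' :: "int \<Rightarrow> real \<Rightarrow> state"
  assumes gam: "\<gamma> > 1"
  shows
   "(\<forall>UL UR. admissible \<gamma> UL \<longrightarrow> admissible \<gamma> UR \<longrightarrow> V3 \<gamma> UR \<noteq> V3 \<gamma> UL \<longrightarrow>
       dot3 (Vent \<gamma> UR - Vent \<gamma> UL) (eckep \<gamma> UL UR) = psi UR - psi UL)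
    \<and>
    ((open T
      \<and> (\<forall>j. dx j > 0)
      \<and> (\<forall>j. \<forall>t\<in>T. admissible \<gamma> (U j t))
      \<and> (\<forall>j. \<forall>t\<in>T. V3 \<gamma> (U (j+1) t) \<noteq> V3 \<gamma> (U j t))
      \<and> (\<forall>j. \<forall>t\<in>T. (U j has_vector_derivative U' j t) (at t))
      \<and> (\<forall>j. \<forall>t\<in>T. dx j *\<^sub>R U' j t =
              - (eckep \<gamma> (U j t) (U (j+1) t) - eckep \<gamma> (U (j-1) t) (U j t))))
     \<longrightarrow>
      (\<forall>j. \<forall>t\<in>T.
         (\<exists>D. ((\<lambda>\<tau>. eta \<gamma> (U j \<tau>)) has_real_derivative D) (at t)
              \<and> dx j * D + zeta_num \<gamma> (U j t) (U (j+1) t) - zeta_num \<gamma> (U (j-1) t) (U j t) = 0)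
       \<and> (\<exists>D. ((\<lambda>\<tau>. dens (U j \<tau>) * (vel (U j \<tau>))^2 / 2) has_real_derivative D) (at t)
              \<and> dx j * D + Kflux \<gamma> (U j t) (U (j+1) t) - Kflux \<gamma> (U (j-1) t) (U j t)
                = - vel (U j t) * (avg (pres \<gamma> (U j t)) (pres \<gamma> (U (j+1) t))
                                   - avg (pres \<gamma> (U (j-1) t)) (pres \<gamma> (U j t))))))"
proof ((rule conjI; (intro impI allI ballI)?), goal_cases)
  case (1 UL UR)
  from \<open>V3 \<gamma> UR \<noteq> V3 \<gamma> UL\<close> show ?case by (rule eckep_entropy_conservative)
next
  case (2 j t)
  then have adm: "admissible \<gamma> (U j t)"
    and v3: "V3 \<gamma> (U (j+1) t) \<noteq> V3 \<gamma> (U j t)" "V3 \<gamma> (U j t) \<noteq> V3 \<gamma> (U (j-1) t)"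
    and dU: "(U j has_vector_derivative U' j t) (at t)"
    and scheme: "dx j *\<^sub>R U' j t = - (eckep \<gamma> (U j t) (U (j+1) t) - eckep \<gamma> (U (j-1) t) (U j t))"
    by (auto dest: bspec[where x = t] spec[where x = "j - 1"])
  have "dens (U j t) \<noteq> 0" using adm by (simp add: admissible_def)
  show ?case
    using has_real_derivative_chain_vector[OF dU eta_has_derivative[OF gam adm]]
      eckep_entropy_balance[OF v3 scheme]
      has_real_derivative_chain_vector[OF dU kinetic_energy_has_derivative[OF \<open>dens (U j t) \<noteq> 0\<close>]]
      eckep_kinetic_energy_balance[OF scheme]
    by blast
qed

end
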